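(* Let $\lambda$ be a singular cardinal. Then $\mathfrak{d}_\lambda>\lambda$, and moreover $\operatorname{cf}(\mathfrak{d}_\lambda)>\lambda$.
   Context: For $f,g\in{}^\lambda\lambda$, $f\le^* g$ means $|\{\beta<\lambda:f(\beta)>g(\beta)\}|<\lambda$ (size less than $\lambda$, not merely bounded). $\mathfrak{d}_\lambda$ is the minimal cardinality of a family $\mathcal{D}\subseteq{}^\lambda\lambda$ such that every $f\in{}^\lambda\lambda$ satisfies $f\le^* g$ for some $g\in\mathcal{D}$. *)

theory Defs
  imports Main
begin

unbundle cardinal_syntax

text \<open>The cardinal lambda is represented by a cardinal well-order r on a type 'a
  (card_order r, so Field r = UNIV); functions lambda -> lambda are then 'a => 'a,
  and values are compared with r.\<close>

definition singular_card :: "'a rel \<Rightarrow> bool" where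
  "singular_card r \<equiv> Card_order r \<and> infinite (Field r) \<and> \<not> regularCard r"

definition le_star :: "'a rel \<Rightarrow> ('a \<Rightarrow> 'a) \<Rightarrow> ('a \<Rightarrow> 'a) \<Rightarrow> bool" where
  "le_star r f g \<equiv> |{b. (g b, f b) \<in> r \<and> f b \<noteq> g b}| <o r"

definition dominating :: "'a rel \<Rightarrow> ('a \<Rightarrow> 'a) set \<Rightarrow> bool" where
  "dominating r D \<equiv> \<forall>f. \<exists>g\<in>D. le_star r f g"

end

theory Submission
  imports Defs
begin

text \<open>Any \<open>\<lambda>\<close> functions \<open>g\<^sub>i\<close> are escaped by a single \<open>f\<close>: split \<open>\<lambda>\<close> into \<open>\<lambda>\<close> disjoint
  copies of \<open>\<lambda>\<close> and let \<open>f\<close> exceed \<open>g\<^sub>i\<close> everywhere on the \<open>i\<close>-th copy. More generally,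
  a union of \<open>\<lambda>\<close> families none of which dominates on any copy of \<open>\<lambda>\<close> does not dominate.
  Hence a dominating family \<open>D\<close> of minimal size has \<open>\<lambda> < |D|\<close>. If \<open>K \<subseteq> D\<close> is cofinal in
  the well-order \<open>card_of D\<close> and \<open>|K| \<le> \<lambda>\<close>, then \<open>D\<close> is the union of the \<open>\<lambda>\<close> initial segments
  below elements of \<open>K\<close>, each too small to dominate by minimality of \<open>|D|\<close>.\<close>

lemma le_star_comp_inj:
  assumes "inj e" and "le_star r f g"
  shows "le_star r (f \<circ> e) (g \<circ> e)"
proof -
  let ?B = "{b. (g b, f b) \<in> r \<and> f b \<noteq> g b}"
  have "inj_on e (e -` ?B)" "e ` (e -` ?B) \<subseteq> ?B"
    using \<open>inj e\<close> inj_on_subset by auto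
  then have "|e -` ?B| \<le>o |?B|"
    using card_of_ordLeq by blast
  moreover have "|?B| <o r"
    using \<open>le_star r f g\<close> unfolding le_star_def .
  ultimately have "|e -` ?B| <o r"
    by (rule ordLeq_ordLess_trans)
  then show ?thesis
    unfolding le_star_def vimage_def by simp
qed

lemma dominating_mono: "dominating r D \<Longrightarrow> D \<subseteq> D' \<Longrightarrow> dominating r D'"
  unfolding dominating_def by blast

lemma singleton_not_dominating:
  assumes "card_order r" and "infinite (UNIV :: 'a set)"
  shows "\<not> dominating r {g :: 'a \<Rightarrow> 'a}"
proof -
  have Cr: "Card_order r" and Fr: "Field r = UNIV"
    using assms(1) card_order_on_Card_order by auto
  have "\<forall>x. \<exists>y. (y, x) \<notin> r"
    using Card_order_infinite_not_under[OF Cr] assms(2) Fr unfolding under_def by auto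
  then obtain succ where succ: "\<And>x. (succ x, x) \<notin> r"
    by metis
  have "Total r" and "Refl r"
    using Cr unfolding card_order_on_def well_order_on_def linear_order_on_def
      partial_order_on_def preorder_on_def by auto
  then have "(x, succ x) \<in> r \<and> succ x \<noteq> x" for x
    using succ[of x] Fr unfolding total_on_def refl_on_def by (metis UNIV_I)
  then have "{b. (g b, succ (g b)) \<in> r \<and> succ (g b) \<noteq> g b} = UNIV"
    by blast
  moreover have "\<not> |UNIV :: 'a set| <o r"
    using card_of_Field_ordIso[OF Cr] Fr not_ordLess_ordIso by auto
  ultimately have "\<not> le_star r (succ \<circ> g) g"
    unfolding le_star_def by simp
  then show ?thesis
    unfolding dominating_def by blast
qed

lemma card_order_Times_embedding:
  fixes r :: "'a rel" and I :: "'i set"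
  assumes "card_order r" and "infinite (UNIV :: 'a set)" and "|I| \<le>o r"
  obtains h :: "'i \<times> 'a \<Rightarrow> 'a" where "inj_on h (I \<times> UNIV)"
proof -
  have Cr: "Card_order r" and Fr: "Field r = UNIV"
    using assms(1) card_order_on_Card_order by auto
  have U: "|UNIV :: 'a set| =o r"
    using card_of_Field_ordIso[OF Cr] Fr by simp
  then have "|I \<times> (UNIV :: 'a set)| \<le>o r"
    using card_of_Times_ordLeq_infinite_Field[OF _ assms(3) _ Cr] assms(2) Fr ordIso_iff_ordLeq
    by auto
  then have "|I \<times> (UNIV :: 'a set)| \<le>o |UNIV :: 'a set|"
    using U ordIso_symmetric ordLeq_ordIso_trans by blast
  then show ?thesis
    using that card_of_ordLeq[of "I \<times> UNIV" "UNIV :: 'a set"] by blast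
qed

lemma UNION_not_dominating:
  fixes r :: "'a rel" and I :: "'i set" and S :: "'i \<Rightarrow> ('a \<Rightarrow> 'a) set"
  assumes co: "card_order r" and inf: "infinite (UNIV :: 'a set)" and I: "|I| \<le>o r"
    and S: "\<And>i e. i \<in> I \<Longrightarrow> inj e \<Longrightarrow> \<not> dominating r ((\<lambda>g. g \<circ> e) ` S i)"
  shows "\<not> dominating r (\<Union>i\<in>I. S i)"
proof
  obtain h :: "'i \<times> 'a \<Rightarrow> 'a" where h: "inj_on h (I \<times> UNIV)"
    using card_order_Times_embedding[OF co inf I] .
  define e where "e i = (\<lambda>\<gamma>. h (i, \<gamma>))" for i
  have e: "inj (e i)" if "i \<in> I" for i
    using h that unfolding e_def inj_on_def by auto
  have "\<forall>i\<in>I. \<exists>\<phi>. \<forall>g\<in>S i. \<not> le_star r \<phi> (g \<circ> e i)"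
    using S[OF _ e] unfolding dominating_def by blast
  then obtain \<phi> where \<phi>: "\<And>i g. i \<in> I \<Longrightarrow> g \<in> S i \<Longrightarrow> \<not> le_star r (\<phi> i) (g \<circ> e i)"
    by metis
  define f where "f \<beta> = (let p = the_inv_into (I \<times> UNIV) h \<beta> in \<phi> (fst p) (snd p))" for \<beta>
  have f: "f \<circ> e i = \<phi> i" if "i \<in> I" for i
    using that h by (auto simp: f_def e_def the_inv_into_f_f)
  assume "dominating r (\<Union>i\<in>I. S i)"
  then obtain i g where "i \<in> I" "g \<in> S i" "le_star r f g"
    unfolding dominating_def by blast
  then show False
    using le_star_comp_inj[OF e, of i r f g] f \<phi> by simp
qed

lemma smaller_than_minimal_not_dominating:
  assumes "\<forall>D'. dominating r D' \<longrightarrow> |D| \<le>o |D'|" and "|E| <o |D|"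
  shows "\<not> dominating r E"
  using assms not_ordLess_ordLeq by blast

lemma card_order_not_ordLess_imp_ordLeq:
  assumes "card_order r" and "\<not> r <o |A|"
  shows "|A| \<le>o r"
  using assms(2) not_ordLess_iff_ordLeq[OF card_of_Well_order
      card_order_on_well_order_on[OF conjunct2[OF card_order_on_Card_order[OF assms(1)]]]]
  by blast

lemma dominating_card_gr:
  assumes co: "card_order r" and inf: "infinite (UNIV :: 'a set)"
    and D: "dominating r (D :: ('a \<Rightarrow> 'a) set)"
  shows "r <o |D|"
proof (rule ccontr)
  assume "\<not> r <o |D|"
  then have "\<not> dominating r (\<Union>g\<in>D. {g})"
    by (rule UNION_not_dominating[OF co inf card_order_not_ordLess_imp_ordLeq[OF co]])
      (simp add: singleton_not_dominating[OF co inf])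
  then show False
    using D by simp
qed

lemma minimal_dominating_cofinal_card_gr:
  assumes co: "card_order r" and inf: "infinite (UNIV :: 'a set)"
    and D: "dominating r (D :: ('a \<Rightarrow> 'a) set)"
    and min: "\<forall>D'. dominating r D' \<longrightarrow> |D| \<le>o |D'|"
    and K: "K \<subseteq> D" "cofinal K (card_of D)"
  shows "r <o |K|"
proof (rule ccontr)
  assume "\<not> r <o |K|"
  then have "\<not> dominating r (\<Union>k\<in>K. underS (card_of D) k)"
  proof (rule UNION_not_dominating[OF co inf card_order_not_ordLess_imp_ordLeq[OF co]])
    fix k and e :: "'a \<Rightarrow> 'a"
    assume "k \<in> K"
    then have "|underS (card_of D) k| <o |D|"
      using K card_of_underS[OF card_of_Card_order, of k D] by (auto simp: Field_card_of)
    then have "|(\<lambda>g. g \<circ> e) ` underS (card_of D) k| <o |D|"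
      using card_of_image ordLeq_ordLess_trans by blast
    then show "\<not> dominating r ((\<lambda>g. g \<circ> e) ` underS (card_of D) k)"
      using min smaller_than_minimal_not_dominating by blast
  qed
  moreover have "D \<subseteq> (\<Union>k\<in>K. underS (card_of D) k)"
    using K unfolding cofinal_def underS_def Field_card_of by blast
  ultimately show False
    using D dominating_mono by blast
qed

theorem claim3p2:
  fixes r :: "'a rel" and D :: "('a \<Rightarrow> 'a) set"
  assumes "card_order r"
    and "singular_card r"
    and "dominating r D"
    and "\<forall>D'. dominating r D' \<longrightarrow> (card_of D, card_of D') \<in> ordLeq"
  shows "(r, card_of D) \<in> ordLess \<and>
         (\<forall>K. K \<subseteq> D \<and> cofinal K (card_of D) \<longrightarrow> (r, card_of K) \<in> ordLess)"
proof -
  have inf: "infinite (UNIV :: 'a set)"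
    using assms(2) card_order_on_Card_order[OF assms(1)] unfolding singular_card_def by simp
  show ?thesis
    using dominating_card_gr[OF assms(1) inf assms(3)]
      minimal_dominating_cofinal_card_gr[OF assms(1) inf assms(3) assms(4)]
    by blast
qed

end
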